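(* Let $f\in\omega^{\subset\omega}$, let $n,m\geq 1$, let $U$ be an $(n+m-1)$-branching set of extensions of $f$, and let $R\subseteq U$. Then either there is an $n$-branching set of extensions of $f$ contained in $R$, or there is an $m$-branching set of extensions of $f$ contained in $U\setminus R$.
   Context: $\omega^{\subset\omega}$ is the set of partial functions from $\omega$ to $\omega$ with finite domain. For $f\in\omega^{\subset\omega}$, an $n$-branching set of extensions of $f$ of length $k$ is defined by induction on $k$: of length $1$, it is a set $U$ of $n$ functions such that for some fixed $x\notin\operatorname{dom}(f)$ each $g\in U$ satisfies $f\subseteq g$ and $\operatorname{dom}(g)=\operatorname{dom}(f)\cup\{x\}$; if $U_0$ is an $n$-branching set of extensions of $f$ of length $k$ and for each $g\in U_0$, $U_g$ is an $n$-branching set of extensions of $g$ of length $1$, then $\bigcup_{g\in U_0}U_g$ is an $n$-branching set of extensions of $f$ of length $k+1$. An $n$-branching set of extensions is one of some length $k\geq1$. *)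

theory Defs
  imports Main
begin

text \<open>Finite partial functions omega to omega are modelled as maps nat to nat option
  with finite domain. branching n f k U: U is an n-branching set of extensions of f
  of length k.\<close>

inductive branching :: "nat \<Rightarrow> (nat \<rightharpoonup> nat) \<Rightarrow> nat \<Rightarrow> (nat \<rightharpoonup> nat) set \<Rightarrow> bool"
  for n :: nat where
  base: "\<lbrakk> x \<notin> dom f; finite U; card U = n;
          \<forall>g\<in>U. f \<subseteq>\<^sub>m g \<and> dom g = dom f \<union> {x} \<rbrakk>
         \<Longrightarrow> branching n f 1 U"
| step: "\<lbrakk> branching n f k U0; \<forall>g\<in>U0. branching n g 1 (V g) \<rbrakk>
         \<Longrightarrow> branching n f (Suc k) (\<Union>g\<in>U0. V g)"

definition is_branching :: "nat \<Rightarrow> (nat \<rightharpoonup> nat) \<Rightarrow> (nat \<rightharpoonup> nat) set \<Rightarrow> bool" where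
  "is_branching n f U \<longleftrightarrow> (\<exists>k\<ge>1. branching n f k U)"

end

theory Submission
  imports Defs
begin

text \<open>At a single level, a node has
  n + m - 1 immediate extensions, so by pigeonhole at least n of them lie in R or at
  least m lie outside R. For longer sets, colour a node of the first k levels red when
  its own immediate extensions contain n elements of R; the induction hypothesis yields
  an n-branching set of red nodes or an m-branching set of non-red nodes, and grafting
  the chosen extensions below each of these nodes gives the required set.\<close>

lemma branching_length_pos: "branching n f k U \<Longrightarrow> k \<ge> 1"
  by (induction rule: branching.induct) auto

lemma branching_1_E:
  assumes "branching n g 1 V"
  obtains x where "x \<notin> dom g" "finite V" "card V = n"
    "\<forall>h\<in>V. g \<subseteq>\<^sub>m h \<and> dom h = dom g \<union> {x}"
  using assms
proof (cases rule: branching.cases)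
  case (step k U0 W)
  then show ?thesis using branching_length_pos[of n g 0 U0] by simp
qed

lemma branching_1_subset:
  assumes "branching N g 1 V" "S \<subseteq> V" "card S = n"
  shows "branching n g 1 S"
proof -
  obtain x where x: "x \<notin> dom g" "finite V" "\<forall>h\<in>V. g \<subseteq>\<^sub>m h \<and> dom h = dom g \<union> {x}"
    using assms(1) by (rule branching_1_E)
  have "finite S"
    using x(2) assms(2) by (rule finite_subset[rotated])
  moreover have "\<forall>h\<in>S. g \<subseteq>\<^sub>m h \<and> dom h = dom g \<union> {x}"
    using x(3) assms(2) by (meson subsetD)
  ultimately show ?thesis
    using x(1) assms(3) by (intro branching.base[of x])
qed

lemma branching_1_subset_card_le:
  assumes "branching N g 1 V" "A \<subseteq> V" "n \<le> card A"
  shows "\<exists>S\<subseteq>A. branching n g 1 S"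
proof -
  obtain S where S: "S \<subseteq> A" "card S = n"
    using obtain_subset_with_card_n[OF assms(3)] .
  have "S \<subseteq> V"
    using S(1) assms(2) by (rule order_trans)
  with assms(1) have "branching n g 1 S"
    using S(2) by (rule branching_1_subset)
  with S(1) show ?thesis by blast
qed

lemma branching_1_partition:
  assumes "branching (n + m - 1) g 1 V" "n \<ge> 1"
  shows "(\<exists>S\<subseteq>V \<inter> R. branching n g 1 S) \<or> (\<exists>S\<subseteq>V - R. branching m g 1 S)"
proof (cases "n \<le> card (V \<inter> R)")
  case True
  from branching_1_subset_card_le[OF assms(1) Int_lower1 this] show ?thesis ..
next
  case False
  obtain x where "finite V" "card V = n + m - 1"
    using assms(1) by (rule branching_1_E)
  then have "card V = card (V \<inter> R) + card (V - R)"
    by (intro card_Int_Diff)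
  with False assms(2) \<open>card V = n + m - 1\<close> have "m \<le> card (V - R)"
    by linarith
  from branching_1_subset_card_le[OF assms(1) Diff_subset this] show ?thesis ..
qed

lemma is_branchingI: "branching n f k U \<Longrightarrow> is_branching n f U"
  unfolding is_branching_def using branching_length_pos by blast

lemma branching_graft:
  assumes "branching n f k W" "\<forall>g\<in>W. \<exists>S\<subseteq>P g. branching n g 1 S"
  shows "\<exists>V\<subseteq>(\<Union>g\<in>W. P g). is_branching n f V"
proof -
  from assms(2) obtain S where S: "\<forall>g\<in>W. S g \<subseteq> P g \<and> branching n g 1 (S g)"
    by metis
  then have "branching n f (Suc k) (\<Union>g\<in>W. S g)"
    using assms(1) by (simp add: branching.step)
  moreover have "(\<Union>g\<in>W. S g) \<subseteq> (\<Union>g\<in>W. P g)"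
    using S by blast
  ultimately show ?thesis
    by (blast intro: is_branchingI)
qed

lemma branching_partition:
  assumes "branching N f k U" "N = n + m - 1" "n \<ge> 1"
  shows "(\<exists>V\<subseteq>U \<inter> R. is_branching n f V) \<or> (\<exists>V\<subseteq>U - R. is_branching m f V)"
  using assms(1)
proof (induction arbitrary: R rule: branching.induct)
  case (base x f U)
  then have "branching N f 1 U"
    by (rule branching.base)
  then have "(\<exists>S\<subseteq>U \<inter> R. branching n f 1 S) \<or> (\<exists>S\<subseteq>U - R. branching m f 1 S)"
    using assms(3) unfolding assms(2) by (rule branching_1_partition)
  then show ?case
    by (meson is_branchingI)
next
  case (step f k U0 V)
  define red where "red = {g\<in>U0. \<exists>S\<subseteq>V g \<inter> R. branching n g 1 S}"
  have "(\<exists>S\<subseteq>V g \<inter> R. branching n g 1 S) \<or> (\<exists>S\<subseteq>V g - R. branching m g 1 S)"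
    if "g \<in> U0" for g
  proof -
    have "branching N g 1 (V g)"
      using step.IH(2) that by blast
    then show ?thesis
      using assms(3) unfolding assms(2) by (rule branching_1_partition)
  qed
  then have non_red: "\<exists>S\<subseteq>V g - R. branching m g 1 S" if "g \<in> U0 - red" for g
    using that unfolding red_def by blast
  from step.IH(1)[of red] show ?case
  proof
    assume "\<exists>W\<subseteq>U0 \<inter> red. is_branching n f W"
    then obtain W k' where W: "W \<subseteq> U0 \<inter> red" "branching n f k' W"
      unfolding is_branching_def by blast
    then have "\<forall>g\<in>W. \<exists>S\<subseteq>V g \<inter> R. branching n g 1 S"
      unfolding red_def by blast
    from branching_graft[OF W(2) this]
    obtain S where "S \<subseteq> (\<Union>g\<in>W. V g \<inter> R)" "is_branching n f S"
      by blast
    moreover have "(\<Union>g\<in>W. V g \<inter> R) \<subseteq> (\<Union>g\<in>U0. V g) \<inter> R"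
      using W(1) by blast
    ultimately show ?thesis
      by (meson order_trans)
  next
    assume "\<exists>W\<subseteq>U0 - red. is_branching m f W"
    then obtain W k' where W: "W \<subseteq> U0 - red" "branching m f k' W"
      unfolding is_branching_def by blast
    then have "\<forall>g\<in>W. \<exists>S\<subseteq>V g - R. branching m g 1 S"
      using non_red by blast
    from branching_graft[OF W(2) this]
    obtain S where "S \<subseteq> (\<Union>g\<in>W. V g - R)" "is_branching m f S"
      by blast
    moreover have "(\<Union>g\<in>W. V g - R) \<subseteq> (\<Union>g\<in>U0. V g) - R"
      using W(1) by blast
    ultimately show ?thesis
      by (meson order_trans)
  qed
qed

theorem mainTheorem7:
  fixes f :: "nat \<rightharpoonup> nat" and n m :: nat
    and U R :: "(nat \<rightharpoonup> nat) set"
  assumes "finite (dom f)" and "n \<ge> 1" and "m \<ge> 1"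
    and "is_branching (n + m - 1) f U"
    and "R \<subseteq> U"
  shows "(\<exists>V. is_branching n f V \<and> V \<subseteq> R) \<or> (\<exists>V. is_branching m f V \<and> V \<subseteq> U - R)"
proof -
  obtain k where "branching (n + m - 1) f k U"
    using assms(4) unfolding is_branching_def by blast
  moreover have "U \<inter> R = R"
    using assms(5) by blast
  ultimately show ?thesis
    using branching_partition[OF _ refl assms(2)] by metis
qed

end
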